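(* Let $m=m_n\ge1$ and $d=d_n$ be integers with $2\le d\le n$, and let $G_{nmd}$ be the random graph on $\{1,\dots,n\}$ obtained by sampling mutually independent uniformly random $d$-element subsets $V_1,\dots,V_m$ of $\{1,\dots,n\}$ and declaring distinct nodes $i,j$ adjacent iff some $V_k$ contains both. Then, as $n\to\infty$, \[ \mathbb{P}(G_{nmd} \text{ is connected}) \to \begin{cases} 0 & \text{if } \log n + m\log(1-d/n) \to +\infty,\\ 1 & \text{if } \log n + m\log(1-d/n) \to -\infty.\end{cases} \]
   Context: Convention $\log 0=-\infty$. *)

theory Defs
  imports "HOL-Analysis.Analysis"
begin

text \<open>Sample space: tuples (V_0,...,V_{m-1}) of d-element subsets of {1..n}.
  Uniform product measure = counting measure on this finite set.\<close>
definition subset_tuples :: "nat \<Rightarrow> nat \<Rightarrow> nat \<Rightarrow> (nat \<Rightarrow> nat set) set" where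
  "subset_tuples n m d = PiE {..<m} (\<lambda>_. {V. V \<subseteq> {1..n} \<and> card V = d})"

definition gen_edges :: "nat \<Rightarrow> nat \<Rightarrow> (nat \<Rightarrow> nat set) \<Rightarrow> (nat \<times> nat) set" where
  "gen_edges n m V = {(i, j). i \<in> {1..n} \<and> j \<in> {1..n} \<and> i \<noteq> j \<and> (\<exists>k<m. i \<in> V k \<and> j \<in> V k)}"

definition gen_connected :: "nat \<Rightarrow> nat \<Rightarrow> (nat \<Rightarrow> nat set) \<Rightarrow> bool" where
  "gen_connected n m V = (\<forall>i\<in>{1..n}. \<forall>j\<in>{1..n}. (i, j) \<in> (gen_edges n m V)\<^sup>*)"

definition prob_connected :: "nat \<Rightarrow> nat \<Rightarrow> nat \<Rightarrow> real" where
  "prob_connected n m d =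
     real (card {V \<in> subset_tuples n m d. gen_connected n m V}) / real (card (subset_tuples n m d))"

definition elog :: "real \<Rightarrow> ereal" where
  "elog x = (if x = 0 then -\<infinity> else ereal (ln x))"

definition threshold_term :: "nat \<Rightarrow> nat \<Rightarrow> nat \<Rightarrow> ereal" where
  "threshold_term n m d = elog (real n) + ereal (real m) * elog (1 - real d / real n)"

end

theory Submission
  imports Defs
begin

text \<open>
  Write \<open>\<epsilon> = n (1 - d/n)^m\<close>, so that the threshold term is \<open>log \<epsilon>\<close>.

  If \<open>\<epsilon> \<rightarrow> \<infinity>\<close>, count the isolated nodes: a fixed node avoids all \<open>m\<close> sets with probability
  \<open>(1 - d/n)^m\<close>, two fixed nodes with probability at most \<open>(1 - d/n)^(2m)\<close>, so the count has
  mean \<open>\<epsilon>\<close> and second moment at most \<open>\<epsilon> + \<epsilon>\<^sup>2\<close>. By Cauchy--Schwarz, some node is isolated with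
  probability at least \<open>\<epsilon> / (1 + \<epsilon>)\<close>, and then the graph is disconnected.

  If \<open>\<epsilon> \<rightarrow> 0\<close>: a disconnected graph has a union \<open>S\<close> of components with \<open>1 \<le> |S| = s \<le> n/2\<close>,
  and every \<open>V\<^sub>k\<close> lies inside \<open>S\<close> or inside its complement. For fixed \<open>S\<close> this has probability
  \<open>(C(s,d) + C(n-s,d))^m / C(n,d)^m \<le> (1 - d/n)^(m s(n-s)/n)\<close>, and summing over all \<open>S\<close>
  gives at most \<open>\<Sum>\<^sub>s C(n,s) (\<epsilon>/n)^(s(n-s)/n) \<le> \<Sum>\<^sub>s (e\<^sup>2 \<surd>\<epsilon>)^s = O(\<surd>\<epsilon>)\<close>.
\<close>

lemma Bernoulli_inequality_powr:
  fixes b N :: real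
  assumes "0 < b" and "1 \<le> N"
  shows "1 + N * (b - 1) \<le> b powr N"
proof -
  have "N * (b - 1) \<le> b powr N - 1 powr N"
    using assms
    by (intro convex_on_imp_above_tangent[where A = "{0<..}"] powr_convex)
       (auto intro!: derivative_eq_intros simp: interior_open)
  then show ?thesis by simp
qed

lemma power_div_fact_le_exp:
  fixes x :: real
  assumes "0 \<le> x"
  shows "x ^ n / fact n \<le> exp x"
proof -
  have "(\<Sum>k\<in>{n}. x ^ k /\<^sub>R fact k) \<le> (\<Sum>k. x ^ k /\<^sub>R fact k)"
    using assms by (intro sum_le_suminf summable_exp_generic) auto
  then show ?thesis by (simp add: exp_def divide_inverse mult.commute)
qed

lemma powr_div_self_le:
  fixes x y :: real
  assumes "1 \<le> y" and "y \<le> x"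
  shows "x powr (y / x) \<le> exp 1 * y"
proof -
  have "y / x * ln x = y / x * ln y + y / x * ln (x / y)"
    using assms by (simp add: ln_div algebra_simps)
  also have "\<dots> \<le> ln y + y / x * (x / y)"
    using assms ln_le_minus_one[of "x / y"]
    by (intro add_mono mult_left_le_one_le mult_left_mono) auto
  also have "\<dots> = 1 + ln y"
    using assms by simp
  finally have "exp (y / x * ln x) \<le> exp (1 + ln y)"
    by simp
  then show ?thesis
    using assms by (simp add: powr_def exp_add)
qed

lemma sum_power_le_double:
  fixes c :: real
  assumes "0 \<le> c" and "c \<le> 1 / 2"
  shows "(\<Sum>s = 1..K. c ^ s) \<le> 2 * c"
proof -
  have "(\<Sum>s = 1..k. c ^ s) \<le> 2 * c - 2 * c ^ Suc k" for k
  proof (induction k)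
    case (Suc K)
    have "2 * c ^ Suc (Suc K) \<le> c ^ Suc K"
      using assms mult_right_mono[of "2 * c" 1 "c ^ Suc K"] by simp
    then show ?case
      using Suc.IH by simp
  qed simp
  from this[of K] show ?thesis
    using zero_le_power[OF assms(1), of "Suc K"] by linarith
qed

lemma powr_power_commute:
  fixes q :: real
  assumes "0 \<le> q"
  shows "(q powr N) ^ m = (q ^ m) powr N"
proof (cases "q = 0")
  case False
  then have "(q powr N) ^ m = (q powr real m) powr N"
    by (simp add: powr_power powr_powr)
  also have "q powr real m = q ^ m"
    using False assms by (simp add: powr_realpow)
  finally show ?thesis .
qed (cases m; simp)

lemma sum_squared_le_card_nonzero:
  fixes f :: "'a \<Rightarrow> real"
  assumes "finite A"
  shows "(\<Sum>x\<in>A. f x)\<^sup>2 \<le> (\<Sum>x\<in>A. (f x)\<^sup>2) * card {x \<in> A. f x \<noteq> 0}"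
proof -
  have "(\<Sum>x\<in>A. f x) = (\<Sum>x\<in>{x \<in> A. f x \<noteq> 0}. f x)"
    and "(\<Sum>x\<in>A. (f x)\<^sup>2) = (\<Sum>x\<in>{x \<in> A. f x \<noteq> 0}. (f x)\<^sup>2)"
    using assms by (auto intro: sum.mono_neutral_right)
  then show ?thesis
    by (simp add: sum_squared_le_sum_of_squares)
qed

lemma sum_card_filter_swap:
  assumes "finite A" and "finite B"
  shows "(\<Sum>a\<in>A. card {b \<in> B. P a b}) = (\<Sum>b\<in>B. card {a \<in> A. P a b})"
proof -
  have "card {b \<in> B. P a b} = (\<Sum>b\<in>B. of_bool (P a b))" for a
    using assms(2) by (simp add: Collect_conj_eq Int_commute)
  moreover have "card {a \<in> A. P a b} = (\<Sum>a\<in>A. of_bool (P a b))" for b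
    using assms(1) by (simp add: Collect_conj_eq Int_commute)
  ultimately show ?thesis
    by (simp only:) (rule sum.swap)
qed

lemma card_PiE_const_filter:
  assumes "finite I"
  shows "card {f \<in> PiE I (\<lambda>_. E). \<forall>i\<in>I. P (f i)} = card {x \<in> E. P x} ^ card I"
proof -
  have "{f \<in> PiE I (\<lambda>_. E). \<forall>i\<in>I. P (f i)} = PiE I (\<lambda>_. {x \<in> E. P x})"
    unfolding PiE_def Pi_def by auto
  then show ?thesis
    using assms by (simp add: card_PiE)
qed

section \<open>Binomial coefficients\<close>

lemma binomial_mult_power_le:
  assumes "a \<le> n"
  shows "real (a choose k) * real n ^ k \<le> real (n choose k) * real a ^ k"
proof (induction k)
  case (Suc k)
  have step: "real (b choose Suc k) * real (Suc k) = real (b choose k) * (real b - real k)"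
    if "k \<le> b" for b
    using binomial_absorption[of k b] binomial_absorb_comp[of b k] that
    by (metis of_nat_diff of_nat_mult mult.commute)
  show ?case
  proof (cases "k \<le> a")
    case True
    have "real (a choose Suc k) * real n ^ Suc k * real (Suc k)
        = (real (a choose Suc k) * real (Suc k)) * (real n ^ k * real n)"
      by (simp add: algebra_simps)
    also have "\<dots> = (real (a choose k) * (real a - real k)) * (real n ^ k * real n)"
      by (simp only: step[OF True])
    also have "\<dots> = (real (a choose k) * real n ^ k) * ((real a - real k) * real n)"
      by (simp only: mult_ac)
    also have "\<dots> \<le> (real (n choose k) * real a ^ k) * (real a * (real n - real k))"
    proof (rule mult_mono[OF Suc.IH])
      show "(real a - real k) * real n \<le> real a * (real n - real k)"
        using mult_right_mono[of "real a" "real n" "real k"] assms by (simp add: algebra_simps)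
    qed (use True in auto)
    also have "\<dots> = (real (n choose Suc k) * real (Suc k)) * (real a ^ k * real a)"
      using step[of n] assms True by (simp only: ac_simps)
    also have "\<dots> = real (n choose Suc k) * real a ^ Suc k * real (Suc k)"
      by (simp add: algebra_simps)
    finally show ?thesis
      by simp
  qed (simp add: binomial_eq_0)
qed simp

lemma binomial_ratio_le:
  assumes "a \<le> n" and "k \<le> n" and "0 < n"
  shows "real (a choose k) / real (n choose k) \<le> (real a / real n) ^ k"
proof -
  have "0 < real (n choose k)" "0 < real n ^ k"
    using assms by simp_all
  then show ?thesis
    using binomial_mult_power_le[OF assms(1), of k]
    by (simp add: power_divide divide_simps mult.commute)
qed

lemma binomial_diff_mult_commute:
  assumes "s \<le> n" and "d \<le> n"
  shows "((n - s) choose d) * (n choose s) = ((n - d) choose s) * (n choose d)"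
proof (cases "s + d \<le> n")
  case True
  have "(n choose s) * ((n - s) choose d) = (n choose (s + d)) * ((s + d) choose s)"
    using choose_mult[of s "s + d" n] True by simp
  also have "\<dots> = (n choose d) * ((n - d) choose s)"
    using choose_mult[of d "s + d" n] binomial_symmetric[of s "s + d"] True by simp
  finally show ?thesis
    by (simp add: mult.commute)
next
  case False
  then show ?thesis
    using assms by (simp add: binomial_eq_0)
qed

lemma binomial_diff_ratio_le:
  assumes "s \<le> n" and "d \<le> n" and "0 < n"
  shows "real ((n - s) choose d) / real (n choose d) \<le> (1 - real d / real n) ^ s"
proof -
  have "real ((n - s) choose d) / real (n choose d) = real ((n - d) choose s) / real (n choose s)"
    using binomial_diff_mult_commute[OF assms(1,2)] assms
    by (simp add: field_simps flip: of_nat_mult)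
  also have "\<dots> \<le> (real (n - d) / real n) ^ s"
    using binomial_ratio_le[of "n - d" n s] assms by simp
  also have "real (n - d) / real n = 1 - real d / real n"
    using assms by (simp add: field_simps of_nat_diff)
  finally show ?thesis .
qed

lemma binomial_pred_eq:
  assumes "0 < n"
  shows "real ((n - 1) choose d) = (1 - real d / real n) * real (n choose d)"
proof -
  have "real (n - d) * real (n choose d) = real n * real ((n - 1) choose d)"
    by (metis binomial_absorb_comp of_nat_mult)
  then show ?thesis
    using assms by (cases "d \<le> n") (auto simp: field_simps of_nat_diff binomial_eq_0)
qed

lemma power_add_power_le_powr:
  assumes k2: "2 \<le> k" and ks: "k \<le> s" and sn: "2 * s \<le> n"
  defines "x \<equiv> real s / real n" and "N \<equiv> real s * real (n - s) / real n"
  shows "(1 - x) ^ k + x ^ k \<le> (1 - real k / real n) powr N"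
proof -
  have n: "4 \<le> real n" "2 \<le> real s" "real s + real s \<le> real n"
    using k2 ks sn by linarith+
  have N_eq: "N = real s * (real n - real s) / real n"
    unfolding N_def using sn by (simp add: of_nat_diff)
  have "2 * (real n - real s) \<le> real s * (real n - real s)"
    using n by (intro mult_right_mono) auto
  moreover have "real n \<le> 2 * (real n - real s)"
    using n by (simp add: algebra_simps)
  ultimately have "real n \<le> real s * (real n - real s)"
    by (rule order.trans[rotated])
  then have N1: "1 \<le> N"
    unfolding N_eq using n by simp
  have x: "0 \<le> x" "x \<le> 1 - x"
    unfolding x_def using n by (auto simp: field_simps)
  show ?thesis
    using k2 ks
  proof (induction k rule: dec_induct)
    case base
    have "(1 - x) ^ 2 + x ^ 2 = 1 + N * ((1 - 2 / real n) - 1)"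
      unfolding N_eq x_def using n by (simp add: field_simps power2_eq_square)
    also have "\<dots> \<le> (1 - 2 / real n) powr N"
      using n N1 by (intro Bernoulli_inequality_powr) auto
    finally show ?case
      by simp
  next
    case (step j)
    \<comment> \<open>each step multiplies the left side by at most \<open>1 - x\<close> and the right side by \<open>b powr N \<ge> 1 - x\<close>\<close>
    define b where "b = 1 - 1 / (real n - real j)"
    have nj: "2 \<le> real n - real j"
      using step n by linarith
    have b: "0 < b"
      unfolding b_def using nj by (simp add: field_simps)
    have j_Suc: "1 - real (Suc j) / real n = (1 - real j / real n) * b"
      unfolding b_def using nj n by (simp add: field_simps)
    have "N * (1 - b) = real s / real n * ((real n - real s) / (real n - real j))"
      unfolding N_eq b_def by simp
    also have "\<dots> \<le> x"
      unfolding x_def using step nj n by (intro mult_left_le) auto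
    finally have "1 - x \<le> 1 + N * (b - 1)"
      by (simp add: algebra_simps)
    also have "\<dots> \<le> b powr N"
      using b N1 by (rule Bernoulli_inequality_powr)
    finally have x_b: "1 - x \<le> b powr N" .
    have "(1 - x) ^ Suc j + x ^ Suc j \<le> (1 - x) * ((1 - x) ^ j + x ^ j)"
      using x mult_right_mono[of x "1 - x" "x ^ j"] by (simp add: algebra_simps)
    also have "\<dots> \<le> b powr N * (1 - real j / real n) powr N"
      using x x_b step.IH step.prems by (intro mult_mono) auto
    also have "\<dots> = (1 - real (Suc j) / real n) powr N"
      unfolding j_Suc using b nj n by (subst powr_mult) (auto simp: field_simps)
    finally show ?case .
  qed
qed

lemma binomial_sum_ratio_le_powr:
  assumes d2: "2 \<le> d" and dn: "d \<le> n" and s1: "1 \<le> s" and sn: "2 * s \<le> n"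
  shows "(real (s choose d) + real ((n - s) choose d)) / real (n choose d)
         \<le> (1 - real d / real n) powr (real s * real (n - s) / real n)"
proof (cases "d \<le> s")
  case True
  have "(real (s choose d) + real ((n - s) choose d)) / real (n choose d)
      \<le> (real s / real n) ^ d + (real (n - s) / real n) ^ d"
    unfolding add_divide_distrib using sn dn s1 by (intro add_mono binomial_ratio_le) auto
  also have "real (n - s) / real n = 1 - real s / real n"
    using sn s1 by (simp add: field_simps of_nat_diff)
  finally show ?thesis
    using power_add_power_le_powr[OF d2 True sn] by simp
next
  case False
  let ?q = "1 - real d / real n"
  have "(real (s choose d) + real ((n - s) choose d)) / real (n choose d)
      \<le> ?q ^ s"
    using False sn dn s1 binomial_diff_ratio_le[of s n d] by (simp add: binomial_eq_0)
  also have "\<dots> \<le> ?q powr (real s * real (n - s) / real n)"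
  proof (cases "d = n")
    case False
    then have "0 < ?q"
      using dn by (simp add: field_simps)
    moreover have "real s * real (n - s) / real n \<le> real s"
      using sn by (simp add: divide_le_eq mult_left_mono)
    ultimately show ?thesis
      by (simp add: powr_realpow[symmetric] powr_mono')
  qed (use s1 in \<open>simp add: power_0_left\<close>)
  finally show ?thesis .
qed

lemma binomial_mult_powr_le:
  assumes s1: "1 \<le> s" and sn: "2 * s \<le> n" and a: "0 \<le> a" "real n * a \<le> \<epsilon>"
    and \<epsilon>1: "\<epsilon> \<le> 1"
  shows "real (n choose s) * a powr (real s * real (n - s) / real n) \<le> (exp 2 * sqrt \<epsilon>) ^ s"
proof (cases "a = 0")
  case False
  have n: "0 < real n" "real s + real s \<le> real n"
    using s1 sn by linarith+
  have "0 < real n * a"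
    using a False n by simp
  then have \<epsilon>: "0 < \<epsilon>"
    using a by linarith
  define N where "N = real s * real (n - s) / real n"
  have N_eq: "N = real s - real s * (real s / real n)"
    unfolding N_def using sn n by (simp add: of_nat_diff field_simps)
  have N2: "real s / 2 \<le> N"
    unfolding N_eq using n mult_right_mono[of "2 * real s" "real n" "real s"]
    by (simp add: field_simps)
  have "a powr N \<le> (\<epsilon> / real n) powr N"
    using a n N2 by (intro powr_mono2) (auto simp: field_simps)
  also have "\<dots> = \<epsilon> powr N / real n powr N"
    by (simp add: powr_divide)
  also have "\<epsilon> powr N \<le> \<epsilon> powr (real s / 2)"
    using \<epsilon> \<epsilon>1 N2 by (intro powr_mono') auto
  also have "\<epsilon> powr (real s / 2) = sqrt \<epsilon> ^ s"
    using \<epsilon> by (simp add: powr_half_sqrt[symmetric] powr_power)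
  also have "real n powr N = real n ^ s / (real n powr (real s / real n)) ^ s"
    unfolding N_eq using n by (simp add: powr_diff powr_realpow powr_power)
  finally have "a powr N \<le> sqrt \<epsilon> ^ s * (real n powr (real s / real n)) ^ s / real n ^ s"
    using n by (simp add: field_simps)
  moreover have "real (n choose s) * fact s \<le> real n ^ s"
    using binomial_fact_pow[of n s] by (metis of_nat_fact of_nat_le_iff of_nat_mult of_nat_power)
  then have "real (n choose s) \<le> real n ^ s / fact s"
    by (simp add: le_divide_eq)
  ultimately have "real (n choose s) * a powr N
      \<le> (real n ^ s / fact s) * (sqrt \<epsilon> ^ s * (real n powr (real s / real n)) ^ s / real n ^ s)"
    by (intro mult_mono) auto
  also have "\<dots> = sqrt \<epsilon> ^ s * (real n powr (real s / real n)) ^ s / fact s"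
    using n by (simp add: field_simps)
  also have "\<dots> \<le> sqrt \<epsilon> ^ s * (exp 1 * real s) ^ s / fact s"
    using powr_div_self_le[of "real s" "real n"] s1 n \<epsilon>
    by (intro divide_right_mono mult_left_mono power_mono) auto
  also have "\<dots> = (sqrt \<epsilon> * exp 1) ^ s * (real s ^ s / fact s)"
    by (simp add: power_mult_distrib)
  also have "\<dots> \<le> (sqrt \<epsilon> * exp 1) ^ s * exp 1 ^ s"
    using power_div_fact_le_exp[of "real s" s] exp_of_nat_mult[of s "1::real"] \<epsilon>
    by (intro mult_left_mono) auto
  also have "\<dots> = (exp 2 * sqrt \<epsilon>) ^ s"
    using exp_add[of 1 "1::real"] by (simp add: power_mult_distrib mult_ac)
  finally show ?thesis
    unfolding N_def .
qed (use a in simp)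

definition node_subsets :: "nat \<Rightarrow> nat \<Rightarrow> nat set set" where
  "node_subsets n d = {W. W \<subseteq> {1..n} \<and> card W = d}"

lemma subset_tuples_eq_PiE: "subset_tuples n m d = PiE {..<m} (\<lambda>_. node_subsets n d)"
  unfolding subset_tuples_def node_subsets_def ..

lemma finite_node_subsets: "finite (node_subsets n d)"
  unfolding node_subsets_def by (rule finite_subset[of _ "Pow {1..n}"]) auto

lemma finite_subset_tuples: "finite (subset_tuples n m d)"
  unfolding subset_tuples_eq_PiE by (intro finite_PiE finite_node_subsets) simp

lemma subset_tuples_subset:
  "V \<in> subset_tuples n m d \<Longrightarrow> k < m \<Longrightarrow> V k \<subseteq> {1..n}"
  unfolding subset_tuples_def by (auto simp: PiE_iff)

lemma card_node_subsets_disjoint: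
  assumes "A \<subseteq> {1..n}"
  shows "card {W \<in> node_subsets n d. W \<inter> A = {}} = (n - card A) choose d"
proof -
  have "{W \<in> node_subsets n d. W \<inter> A = {}} = {W. W \<subseteq> {1..n} - A \<and> card W = d}"
    unfolding node_subsets_def by auto
  then show ?thesis
    using n_subsets[of "{1..n} - A" d] assms by (simp add: card_Diff_subset finite_subset)
qed

lemma card_subset_tuples_filter:
  "card {V \<in> subset_tuples n m d. \<forall>k<m. P (V k)} = card {W \<in> node_subsets n d. P W} ^ m"
  using card_PiE_const_filter[of "{..<m}" "node_subsets n d" P]
  unfolding subset_tuples_eq_PiE by (simp add: lessThan_def)

lemma card_subset_tuples: "card (subset_tuples n m d) = (n choose d) ^ m"
  using card_subset_tuples_filter[of n m d "\<lambda>_. True"] card_node_subsets_disjoint[of "{}" n d]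
  by simp

lemma card_subset_tuples_avoiding:
  assumes "A \<subseteq> {1..n}"
  shows "card {V \<in> subset_tuples n m d. \<forall>k<m. V k \<inter> A = {}} = ((n - card A) choose d) ^ m"
  using card_subset_tuples_filter[of n m d "\<lambda>W. W \<inter> A = {}"] card_node_subsets_disjoint[OF assms]
  by simp

lemma one_minus_prob_connected_eq:
  assumes "d \<le> n"
  shows "1 - prob_connected n m d
         = real (card {V \<in> subset_tuples n m d. \<not> gen_connected n m V}) / real (n choose d) ^ m"
proof -
  have "{V \<in> subset_tuples n m d. \<not> gen_connected n m V}
      = subset_tuples n m d - {V \<in> subset_tuples n m d. gen_connected n m V}"
    by auto
  then have "card {V \<in> subset_tuples n m d. \<not> gen_connected n m V}
      = card (subset_tuples n m d) - card {V \<in> subset_tuples n m d. gen_connected n m V}"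
    by (simp add: card_Diff_subset finite_subset finite_subset_tuples)
  moreover have "card {V \<in> subset_tuples n m d. gen_connected n m V} \<le> card (subset_tuples n m d)"
    by (intro card_mono finite_subset_tuples) auto
  ultimately show ?thesis
    using assms unfolding prob_connected_def card_subset_tuples
    by (simp add: of_nat_diff field_simps)
qed

lemma prob_connected_le_1:
  assumes "d \<le> n"
  shows "prob_connected n m d \<le> 1"
proof -
  have "0 \<le> 1 - prob_connected n m d"
    unfolding one_minus_prob_connected_eq[OF assms] by simp
  then show ?thesis
    by simp
qed

section \<open>Isolated nodes\<close>

definition isolated_nodes :: "nat \<Rightarrow> nat \<Rightarrow> (nat \<Rightarrow> nat set) \<Rightarrow> nat set" where
  "isolated_nodes n m V = {i \<in> {1..n}. \<forall>k<m. i \<notin> V k}"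

lemma connected_imp_no_isolated_nodes:
  assumes "2 \<le> n" and "gen_connected n m V"
  shows "isolated_nodes n m V = {}"
proof -
  have "\<exists>k<m. i \<in> V k" if i: "i \<in> {1..n}" for i
  proof -
    define j where "j = (if i = 1 then 2 else 1 :: nat)"
    have j: "j \<in> {1..n}" "j \<noteq> i"
      unfolding j_def using assms(1) by auto
    then have "(i, j) \<in> (gen_edges n m V)\<^sup>+"
      using assms(2) i unfolding gen_connected_def by (metis rtranclD)
    then obtain y where "(i, y) \<in> gen_edges n m V"
      by (meson converse_tranclE)
    then show ?thesis
      unfolding gen_edges_def by auto
  qed
  then show ?thesis
    unfolding isolated_nodes_def by auto
qed

lemma sum_card_isolated_nodes:
  "(\<Sum>V\<in>subset_tuples n m d. card (isolated_nodes n m V)) = n * ((n - 1) choose d) ^ m"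
proof -
  have "(\<Sum>V\<in>subset_tuples n m d. card (isolated_nodes n m V))
      = (\<Sum>i\<in>{1..n}. card {V \<in> subset_tuples n m d. \<forall>k<m. V k \<inter> {i} = {}})"
    unfolding isolated_nodes_def
    by (subst sum_card_filter_swap) (auto simp: finite_subset_tuples)
  also have "\<dots> = (\<Sum>i\<in>{1..n}. ((n - 1) choose d) ^ m)"
  proof (intro sum.cong refl)
    fix i assume "i \<in> {1..n}"
    then show "card {V \<in> subset_tuples n m d. \<forall>k<m. V k \<inter> {i} = {}} = ((n - 1) choose d) ^ m"
      using card_subset_tuples_avoiding[of "{i}" n m d] by simp
  qed
  finally show ?thesis
    by simp
qed

lemma sum_card_isolated_nodes_squared:
  "(\<Sum>V\<in>subset_tuples n m d. card (isolated_nodes n m V) ^ 2)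
   = n * ((n - 1) choose d) ^ m + n * (n - 1) * ((n - 2) choose d) ^ m"
proof -
  define avoiding where "avoiding A = {V \<in> subset_tuples n m d. \<forall>k<m. V k \<inter> A = {}}" for A
  have "isolated_nodes n m V \<times> isolated_nodes n m V
      = {p \<in> {1..n} \<times> {1..n}. \<forall>k<m. V k \<inter> {fst p, snd p} = {}}" for V
    unfolding isolated_nodes_def by auto
  then have "(\<Sum>V\<in>subset_tuples n m d. card (isolated_nodes n m V) ^ 2)
      = (\<Sum>V\<in>subset_tuples n m d. card {p \<in> {1..n} \<times> {1..n}. \<forall>k<m. V k \<inter> {fst p, snd p} = {}})"
    by (simp add: power2_eq_square flip: card_cartesian_product)
  also have "\<dots> = (\<Sum>p\<in>{1..n} \<times> {1..n}. card (avoiding {fst p, snd p}))"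
    unfolding avoiding_def by (rule sum_card_filter_swap) (simp_all add: finite_subset_tuples)
  also have "\<dots> = (\<Sum>i\<in>{1..n}. \<Sum>j\<in>{1..n}. card (avoiding {i, j}))"
    by (simp add: sum.cartesian_product split_def)
  also have "\<dots> = (\<Sum>i\<in>{1..n}. ((n - 1) choose d) ^ m + (n - 1) * ((n - 2) choose d) ^ m)"
  proof (intro sum.cong refl)
    fix i assume i: "i \<in> {1..n}"
    have "(\<Sum>j\<in>{1..n}. card (avoiding {i, j}))
        = card (avoiding {i}) + (\<Sum>j\<in>{1..n} - {i}. card (avoiding {i, j}))"
      using i by (simp add: sum.remove)
    also have "\<dots> = ((n - 1) choose d) ^ m + (\<Sum>j\<in>{1..n} - {i}. ((n - 2) choose d) ^ m)"
    proof -
      have "card (avoiding {i}) = ((n - 1) choose d) ^ m"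
        using card_subset_tuples_avoiding[of "{i}" n m d] i unfolding avoiding_def by simp
      moreover have "card (avoiding {i, j}) = ((n - 2) choose d) ^ m" if "j \<in> {1..n} - {i}" for j
        using card_subset_tuples_avoiding[of "{i, j}" n m d] i that unfolding avoiding_def
        by (simp add: numeral_2_eq_2)
      ultimately show ?thesis
        by simp
    qed
    finally show "(\<Sum>j\<in>{1..n}. card (avoiding {i, j}))
        = ((n - 1) choose d) ^ m + (n - 1) * ((n - 2) choose d) ^ m"
      using i by simp
  qed
  finally show ?thesis
    by (simp add: algebra_simps)
qed

lemma first_moment_isolated_nodes:
  assumes "0 < n"
  shows "(\<Sum>V\<in>subset_tuples n m d. real (card (isolated_nodes n m V)))
         = real n * (1 - real d / real n) ^ m * real (n choose d) ^ m"
  using sum_card_isolated_nodes[of n m d] binomial_pred_eq[OF assms, of d]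
  by (simp flip: of_nat_sum add: power_mult_distrib)

lemma second_moment_isolated_nodes:
  fixes n m d :: nat
  assumes n2: "2 \<le> n" and dn: "d \<le> n"
  defines "\<epsilon> \<equiv> real n * (1 - real d / real n) ^ m"
  shows "(\<Sum>V\<in>subset_tuples n m d. real (card (isolated_nodes n m V)) ^ 2)
         \<le> (\<epsilon> + \<epsilon>\<^sup>2) * real (n choose d) ^ m"
proof -
  let ?q = "1 - real d / real n" and ?C = "real (n choose d)"
  have "real ((n - 2) choose d) \<le> ?q ^ 2 * ?C"
    using binomial_diff_ratio_le[of 2 n d] n2 dn by (simp add: divide_le_eq)
  then have pairs: "real n * real (n - 1) * real ((n - 2) choose d) ^ m
      \<le> (real n * real n) * (?q ^ 2 * ?C) ^ m"
    using n2 by (intro mult_mono power_mono) auto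
  have "(\<Sum>V\<in>subset_tuples n m d. real (card (isolated_nodes n m V)) ^ 2)
      = real n * real ((n - 1) choose d) ^ m + real n * real (n - 1) * real ((n - 2) choose d) ^ m"
    unfolding of_nat_power[symmetric] of_nat_sum[symmetric] sum_card_isolated_nodes_squared
    by (simp only: of_nat_add of_nat_mult of_nat_power)
  also have "real n * real ((n - 1) choose d) ^ m = \<epsilon> * ?C ^ m"
    using binomial_pred_eq[of n d] n2 unfolding \<epsilon>_def by (simp add: power_mult_distrib)
  also note pairs
  also have "(real n * real n) * (?q ^ 2 * ?C) ^ m = \<epsilon>\<^sup>2 * ?C ^ m"
  proof -
    have "(?q ^ 2) ^ m = (?q ^ m)\<^sup>2"
      by (simp flip: power_mult add: mult.commute)
    then show ?thesis
      unfolding \<epsilon>_def power_mult_distrib by (simp add: power2_eq_square mult_ac)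
  qed
  finally show ?thesis
    by (simp add: algebra_simps)
qed

lemma prob_connected_le:
  fixes n m d :: nat
  assumes n2: "2 \<le> n" and dn: "d \<le> n"
  defines "\<epsilon> \<equiv> real n * (1 - real d / real n) ^ m"
  shows "prob_connected n m d \<le> 1 / (1 + \<epsilon>)"
proof -
  define \<Omega> where "\<Omega> = subset_tuples n m d"
  define M where "M = real (card \<Omega>)"
  define X where "X V = real (card (isolated_nodes n m V))" for V
  define K where "K = real (card {V \<in> \<Omega>. X V \<noteq> 0})"
  have M: "M = real (n choose d) ^ m" "0 < M"
    unfolding M_def \<Omega>_def card_subset_tuples using dn by simp_all
  have \<epsilon>: "0 \<le> \<epsilon>"
    unfolding \<epsilon>_def using dn n2 by (simp add: field_simps)
  \<comment> \<open>the second-moment method: Cauchy--Schwarz on the support of \<open>X\<close>\<close>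
  have "(\<epsilon> * M)\<^sup>2 \<le> (\<Sum>V\<in>\<Omega>. (X V)\<^sup>2) * K"
    using first_moment_isolated_nodes[of n m d] n2 sum_squared_le_card_nonzero[of \<Omega> X]
    unfolding K_def X_def \<Omega>_def \<epsilon>_def M by (simp add: finite_subset_tuples)
  also have "\<dots> \<le> (\<epsilon> + \<epsilon>\<^sup>2) * M * K"
    using second_moment_isolated_nodes[OF n2 dn, of m]
    unfolding X_def \<Omega>_def \<epsilon>_def M K_def by (intro mult_right_mono) auto
  finally have "(\<epsilon> * M) * (\<epsilon> * M) \<le> (\<epsilon> * M) * ((1 + \<epsilon>) * K)"
    by (simp add: power2_eq_square algebra_simps)
  then have K_lower: "\<epsilon> * M \<le> (1 + \<epsilon>) * K"
    using M \<epsilon> by (cases "\<epsilon> = 0") (simp_all add: K_def mult_le_cancel_left_pos)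
  have "{V \<in> \<Omega>. gen_connected n m V} \<subseteq> \<Omega> - {V \<in> \<Omega>. X V \<noteq> 0}"
    using connected_imp_no_isolated_nodes[OF n2] unfolding X_def by auto
  then have "card {V \<in> \<Omega>. gen_connected n m V} \<le> card \<Omega> - card {V \<in> \<Omega>. X V \<noteq> 0}"
    unfolding \<Omega>_def
    by (metis (no_types, lifting) card_Diff_subset card_mono finite_Diff finite_subset_tuples
        finite_subset mem_Collect_eq subsetI)
  then have "real (card {V \<in> \<Omega>. gen_connected n m V}) \<le> M - K"
    unfolding M_def K_def \<Omega>_def
    using card_mono[OF finite_subset_tuples, of "{V \<in> subset_tuples n m d. X V \<noteq> 0}" n m d]
    by (simp add: of_nat_diff)
  then have "prob_connected n m d \<le> (M - K) / M"
    unfolding prob_connected_def M_def \<Omega>_def by (intro divide_right_mono) auto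
  also have "\<dots> \<le> 1 / (1 + \<epsilon>)"
    using K_lower M \<epsilon> by (simp add: field_simps)
  finally show ?thesis .
qed

section \<open>Separated node sets\<close>

definition no_crossing :: "nat \<Rightarrow> (nat \<Rightarrow> nat set) \<Rightarrow> nat set \<Rightarrow> bool" where
  "no_crossing m V S \<longleftrightarrow> (\<forall>k<m. V k \<subseteq> S \<or> V k \<inter> S = {})"

lemma no_crossing_complement:
  assumes "V \<in> subset_tuples n m d" and "no_crossing m V S"
  shows "no_crossing m V ({1..n} - S)"
  using assms subset_tuples_subset[OF assms(1)] unfolding no_crossing_def by blast

lemma no_crossing_component:
  assumes "V \<in> subset_tuples n m d"
  shows "no_crossing m V {j \<in> {1..n}. (i, j) \<in> (gen_edges n m V)\<^sup>*}"
  unfolding no_crossing_def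
proof (intro allI impI)
  fix k assume "k < m"
  have "j \<in> {1..n}" and "(i, j) \<in> (gen_edges n m V)\<^sup>*"
    if "a \<in> V k" "(i, a) \<in> (gen_edges n m V)\<^sup>*" "j \<in> V k" for a j
  proof -
    show "j \<in> {1..n}"
      using subset_tuples_subset[OF assms \<open>k < m\<close>] that by blast
    have "(a, j) \<in> (gen_edges n m V)\<^sup>="
      using subset_tuples_subset[OF assms \<open>k < m\<close>] that \<open>k < m\<close>
      unfolding gen_edges_def by auto
    then show "(i, j) \<in> (gen_edges n m V)\<^sup>*"
      using that(2) by (auto intro: rtrancl_into_rtrancl)
  qed
  then show "V k \<subseteq> {j \<in> {1..n}. (i, j) \<in> (gen_edges n m V)\<^sup>*} \<or>
             V k \<inter> {j \<in> {1..n}. (i, j) \<in> (gen_edges n m V)\<^sup>*} = {}"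
    by blast
qed

lemma disconnected_imp_no_crossing:
  assumes V: "V \<in> subset_tuples n m d" and "\<not> gen_connected n m V"
  obtains S where "S \<subseteq> {1..n}" "1 \<le> card S" "2 * card S \<le> n" "no_crossing m V S"
proof -
  obtain i j where ij: "i \<in> {1..n}" "j \<in> {1..n}" "(i, j) \<notin> (gen_edges n m V)\<^sup>*"
    using assms(2) unfolding gen_connected_def by blast
  define C where "C = {j \<in> {1..n}. (i, j) \<in> (gen_edges n m V)\<^sup>*}"
  have C: "C \<subseteq> {1..n}" "i \<in> C" "j \<in> {1..n} - C"
    unfolding C_def using ij by auto
  have "no_crossing m V C" "no_crossing m V ({1..n} - C)"
    unfolding C_def using no_crossing_component[OF V] no_crossing_complement[OF V] by blast+
  moreover have "1 \<le> card C" "1 \<le> card ({1..n} - C)"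
    using C by (auto simp: Suc_le_eq card_gt_0_iff finite_subset)
  moreover have "card ({1..n} - C) = n - card C"
    using C by (simp add: card_Diff_subset finite_subset)
  ultimately show thesis
    using that[of C] that[of "{1..n} - C"] C(1) by (cases "2 * card C \<le> n") auto
qed

lemma card_no_crossing_le:
  assumes "S \<subseteq> {1..n}"
  shows "card {V \<in> subset_tuples n m d. no_crossing m V S}
         \<le> ((card S choose d) + ((n - card S) choose d)) ^ m"
proof -
  have split: "{W \<in> node_subsets n d. W \<subseteq> S \<or> W \<inter> S = {}}
      = {W \<in> node_subsets n d. W \<inter> ({1..n} - S) = {}} \<union> {W \<in> node_subsets n d. W \<inter> S = {}}"
    unfolding node_subsets_def by auto
  have "card {W \<in> node_subsets n d. W \<subseteq> S \<or> W \<inter> S = {}}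
      \<le> card {W \<in> node_subsets n d. W \<inter> ({1..n} - S) = {}} + card {W \<in> node_subsets n d. W \<inter> S = {}}"
    unfolding split by (rule card_Un_le)
  also have "\<dots> = (card S choose d) + ((n - card S) choose d)"
  proof -
    have "card S \<le> n" "card ({1..n} - S) = n - card S"
      using assms card_mono[OF _ assms] by (auto simp: card_Diff_subset finite_subset)
    then show ?thesis
      using assms card_node_subsets_disjoint[of "{1..n} - S" n d] card_node_subsets_disjoint[of S n d]
      by simp
  qed
  finally show ?thesis
    unfolding no_crossing_def card_subset_tuples_filter[of n m d "\<lambda>W. W \<subseteq> S \<or> W \<inter> S = {}"]
    by (rule power_mono) simp
qed

lemma card_disconnected_le:
  "card {V \<in> subset_tuples n m d. \<not> gen_connected n m V}
   \<le> (\<Sum>s = 1..n div 2. (n choose s) * ((s choose d) + ((n - s) choose d)) ^ m)"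
proof -
  define cut_sets where "cut_sets s = {S. S \<subseteq> {1..n} \<and> card S = s}" for s
  define respecting where "respecting S = {V \<in> subset_tuples n m d. no_crossing m V S}" for S
  have finite_cut_sets: "finite (cut_sets s)" for s
    unfolding cut_sets_def by (rule finite_subset[of _ "Pow {1..n}"]) auto
  have "{V \<in> subset_tuples n m d. \<not> gen_connected n m V} \<subseteq> (\<Union>s \<in> {1..n div 2}. \<Union>S \<in> cut_sets s. respecting S)"
  proof
    fix V assume "V \<in> {V \<in> subset_tuples n m d. \<not> gen_connected n m V}"
    then have V: "V \<in> subset_tuples n m d" "\<not> gen_connected n m V"
      by auto
    then obtain S where "S \<subseteq> {1..n}" "1 \<le> card S" "2 * card S \<le> n" "no_crossing m V S"
      by (rule disconnected_imp_no_crossing)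
    with V show "V \<in> (\<Union>s \<in> {1..n div 2}. \<Union>S \<in> cut_sets s. respecting S)"
      unfolding cut_sets_def respecting_def by (intro UN_I[of "card S"] UN_I[of S]) auto
  qed
  then have "card {V \<in> subset_tuples n m d. \<not> gen_connected n m V}
      \<le> card (\<Union>s \<in> {1..n div 2}. \<Union>S \<in> cut_sets s. respecting S)"
    by (intro card_mono finite_subset[OF _ finite_subset_tuples[of n m d]])
       (auto simp: respecting_def)
  also have "\<dots> \<le> (\<Sum>s = 1..n div 2. \<Sum>S \<in> cut_sets s. card (respecting S))"
    using finite_cut_sets by (intro order.trans[OF card_UN_le] sum_mono card_UN_le) auto
  also have "\<dots> \<le> (\<Sum>s = 1..n div 2. \<Sum>S \<in> cut_sets s. ((s choose d) + ((n - s) choose d)) ^ m)"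
    unfolding respecting_def cut_sets_def using card_no_crossing_le by (intro sum_mono) fastforce
  also have "\<dots> = (\<Sum>s = 1..n div 2. (n choose s) * ((s choose d) + ((n - s) choose d)) ^ m)"
    using n_subsets[of "{1..n}"] by (simp add: cut_sets_def)
  finally show ?thesis .
qed

lemma one_minus_prob_connected_le:
  fixes n m d :: nat
  assumes n2: "2 \<le> n" and d2: "2 \<le> d" and dn: "d \<le> n"
  defines "\<epsilon> \<equiv> real n * (1 - real d / real n) ^ m"
  assumes small: "exp 2 * sqrt \<epsilon> \<le> 1 / 2"
  shows "1 - prob_connected n m d \<le> 2 * (exp 2 * sqrt \<epsilon>)"
proof -
  let ?q = "1 - real d / real n" and ?C = "real (n choose d)"
  let ?N = "\<lambda>s. real s * real (n - s) / real n"
  have q: "0 \<le> ?q"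
    using dn n2 by (simp add: field_simps)
  have \<epsilon>: "0 \<le> \<epsilon>"
    unfolding \<epsilon>_def using q by simp
  then have "sqrt \<epsilon> \<le> exp 2 * sqrt \<epsilon>"
    using mult_right_mono[of 1 "exp 2" "sqrt \<epsilon>"] by simp
  then have "sqrt \<epsilon> \<le> 1"
    using small by linarith
  then have \<epsilon>1: "\<epsilon> \<le> 1"
    by simp
  have "1 - prob_connected n m d
      \<le> (\<Sum>s = 1..n div 2. real (n choose s) * real ((s choose d) + ((n - s) choose d)) ^ m) / ?C ^ m"
    unfolding one_minus_prob_connected_eq[OF dn]
    using of_nat_mono[OF card_disconnected_le[of n m d], where 'a = real]
    by (intro divide_right_mono) simp_all
  also have "\<dots> = (\<Sum>s = 1..n div 2. real (n choose s)
      * ((real (s choose d) + real ((n - s) choose d)) / ?C) ^ m)"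
    by (simp add: sum_divide_distrib power_divide)
  also have "\<dots> \<le> (\<Sum>s = 1..n div 2. real (n choose s) * (?q powr ?N s) ^ m)"
    using binomial_sum_ratio_le_powr d2 dn by (intro sum_mono mult_left_mono power_mono) auto
  also have "\<dots> = (\<Sum>s = 1..n div 2. real (n choose s) * (?q ^ m) powr ?N s)"
    using q by (simp add: powr_power_commute)
  also have "\<dots> \<le> (\<Sum>s = 1..n div 2. (exp 2 * sqrt \<epsilon>) ^ s)"
    using q \<epsilon>1 unfolding \<epsilon>_def by (intro sum_mono binomial_mult_powr_le) auto
  also have "\<dots> \<le> 2 * (exp 2 * sqrt \<epsilon>)"
    using small \<epsilon> by (intro sum_power_le_double) auto
  finally show ?thesis .
qed

section \<open>The threshold\<close>

lemma threshold_term_eq_elog: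
  assumes "0 < n" and "d \<le> n" and "1 \<le> m"
  shows "threshold_term n m d = elog (real n * (1 - real d / real n) ^ m)"
proof -
  define q where "q = 1 - real d / real n"
  have n: "0 < real n"
    using assms by simp
  have "0 \<le> q"
    using assms by (simp add: q_def field_simps)
  then consider "q = 0" | "0 < q"
    by linarith
  then have "threshold_term n m d = elog (real n * q ^ m)"
  proof cases
    case 1
    then show ?thesis
      using assms n unfolding threshold_term_def elog_def q_def[symmetric] by (simp add: power_0_left)
  next
    case 2
    then have "threshold_term n m d = ereal (ln (real n) + real m * ln q)"
      using n unfolding threshold_term_def elog_def q_def[symmetric] by simp
    also have "\<dots> = elog (real n * q ^ m)"
      using 2 n unfolding elog_def by (simp add: ln_mult ln_realpow)
    finally show ?thesis .
  qed
  then show ?thesis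
    unfolding q_def .
qed

lemma elog_tendsto_PInfty_imp_at_top:
  assumes "\<forall>\<^sub>F x in F. 0 \<le> f x" and "((\<lambda>x. elog (f x)) \<longlongrightarrow> \<infinity>) F"
  shows "filterlim f at_top F"
  unfolding filterlim_at_top_gt[where c = 0]
proof (intro allI impI)
  fix Z :: real assume "0 < Z"
  have "\<forall>\<^sub>F x in F. ereal (ln Z) < elog (f x)"
    using assms(2) by (simp add: tendsto_PInfty)
  with assms(1) show "\<forall>\<^sub>F x in F. Z \<le> f x"
  proof eventually_elim
    case (elim x)
    then show ?case
      using \<open>0 < Z\<close> unfolding elog_def by (auto split: if_splits)
  qed
qed

lemma elog_tendsto_MInfty_imp_tendsto_0:
  assumes "\<forall>\<^sub>F x in F. 0 \<le> f x" and "((\<lambda>x. elog (f x)) \<longlongrightarrow> -\<infinity>) F"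
  shows "(f \<longlongrightarrow> 0) F"
proof (rule tendstoI)
  fix e :: real assume "0 < e"
  have "\<forall>\<^sub>F x in F. elog (f x) < ereal (ln e)"
    using assms(2) by (simp add: tendsto_MInfty)
  with assms(1) show "\<forall>\<^sub>F x in F. dist (f x) 0 < e"
  proof eventually_elim
    case (elim x)
    then show ?case
      using \<open>0 < e\<close> unfolding elog_def by (auto split: if_splits)
  qed
qed

lemma prob_connected_tendsto_0:
  fixes m d :: "nat \<Rightarrow> nat"
  assumes large: "\<forall>\<^sub>F n in sequentially. 2 \<le> n \<and> d n \<le> n"
    and \<epsilon>: "filterlim (\<lambda>n. real n * (1 - real (d n) / real n) ^ m n) at_top sequentially"
  shows "((\<lambda>n. prob_connected n (m n) (d n)) \<longlongrightarrow> 0) sequentially"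
proof -
  let ?\<epsilon> = "\<lambda>n. real n * (1 - real (d n) / real n) ^ m n"
  have lower: "\<forall>\<^sub>F n in sequentially. 0 \<le> prob_connected n (m n) (d n)"
    by (simp add: prob_connected_def)
  have upper: "\<forall>\<^sub>F n in sequentially. prob_connected n (m n) (d n) \<le> 1 / (1 + ?\<epsilon> n)"
    using large by eventually_elim (simp add: prob_connected_le)
  have "((\<lambda>n. 1 / (1 + ?\<epsilon> n)) \<longlongrightarrow> 0) sequentially"
    using \<epsilon> by (intro tendsto_divide_0[OF tendsto_const] filterlim_at_top_imp_at_infinity
        filterlim_tendsto_add_at_top[OF tendsto_const])
  then show ?thesis
    by (rule tendsto_sandwich[OF lower upper tendsto_const])
qed

lemma prob_connected_tendsto_1:
  fixes m d :: "nat \<Rightarrow> nat"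
  assumes large: "\<forall>\<^sub>F n in sequentially. 2 \<le> n \<and> 2 \<le> d n \<and> d n \<le> n"
    and \<epsilon>: "((\<lambda>n. real n * (1 - real (d n) / real n) ^ m n) \<longlongrightarrow> 0) sequentially"
  shows "((\<lambda>n. prob_connected n (m n) (d n)) \<longlongrightarrow> 1) sequentially"
proof -
  let ?bound = "\<lambda>n. exp 2 * sqrt (real n * (1 - real (d n) / real n) ^ m n)"
  have bound: "(?bound \<longlongrightarrow> 0) sequentially"
    using tendsto_mult_left[OF tendsto_real_sqrt[OF \<epsilon>], of "exp 2"] by simp
  then have "\<forall>\<^sub>F n in sequentially. ?bound n < 1 / 2"
    by (rule order_tendstoD) simp
  with large have lower: "\<forall>\<^sub>F n in sequentially. 1 - 2 * ?bound n \<le> prob_connected n (m n) (d n)"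
  proof eventually_elim
    case (elim n)
    then show ?case
      using one_minus_prob_connected_le[of n "d n" "m n"] by simp
  qed
  have upper: "\<forall>\<^sub>F n in sequentially. prob_connected n (m n) (d n) \<le> 1"
    using large by eventually_elim (simp add: prob_connected_le_1)
  have "((\<lambda>n. 1 - 2 * ?bound n) \<longlongrightarrow> 1) sequentially"
    using tendsto_diff[OF tendsto_const[of 1] tendsto_mult_left[OF bound, of 2]] by simp
  then show ?thesis
    by (rule tendsto_sandwich[OF lower upper _ tendsto_const])
qed

theorem mainTheorem4:
  fixes m d :: "nat \<Rightarrow> nat"
  assumes "\<And>n. n \<ge> 2 \<Longrightarrow> m n \<ge> 1"
    and "\<And>n. n \<ge> 2 \<Longrightarrow> 2 \<le> d n \<and> d n \<le> n"
  shows "(((\<lambda>n. threshold_term n (m n) (d n)) \<longlongrightarrow> \<infinity>) sequentially \<longrightarrow>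
           ((\<lambda>n. prob_connected n (m n) (d n)) \<longlongrightarrow> 0) sequentially) \<and>
         (((\<lambda>n. threshold_term n (m n) (d n)) \<longlongrightarrow> -\<infinity>) sequentially \<longrightarrow>
           ((\<lambda>n. prob_connected n (m n) (d n)) \<longlongrightarrow> 1) sequentially)"
proof -
  define \<epsilon> where "\<epsilon> n = real n * (1 - real (d n) / real n) ^ m n" for n
  have large: "\<forall>\<^sub>F n in sequentially. 2 \<le> n \<and> 1 \<le> m n \<and> 2 \<le> d n \<and> d n \<le> n"
    using eventually_ge_at_top[of 2] by eventually_elim (use assms in auto)
  then have \<epsilon>: "\<forall>\<^sub>F n in sequentially. 0 \<le> \<epsilon> n"
    by eventually_elim (simp add: \<epsilon>_def field_simps)
  have "\<forall>\<^sub>F n in sequentially. threshold_term n (m n) (d n) = elog (\<epsilon> n)"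
    using large by eventually_elim (simp add: \<epsilon>_def threshold_term_eq_elog)
  then have threshold: "((\<lambda>n. threshold_term n (m n) (d n)) \<longlongrightarrow> L) sequentially
      \<longleftrightarrow> ((\<lambda>n. elog (\<epsilon> n)) \<longlongrightarrow> L) sequentially" for L
    by (rule tendsto_cong)
  show ?thesis
  proof (intro conjI impI)
    assume "((\<lambda>n. threshold_term n (m n) (d n)) \<longlongrightarrow> \<infinity>) sequentially"
    then have "filterlim \<epsilon> at_top sequentially"
      using \<epsilon> by (intro elog_tendsto_PInfty_imp_at_top) (simp_all add: threshold)
    then show "((\<lambda>n. prob_connected n (m n) (d n)) \<longlongrightarrow> 0) sequentially"
      using large unfolding \<epsilon>_def by (intro prob_connected_tendsto_0) (auto elim: eventually_mono)
  next
    assume "((\<lambda>n. threshold_term n (m n) (d n)) \<longlongrightarrow> -\<infinity>) sequentially"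
    then have "(\<epsilon> \<longlongrightarrow> 0) sequentially"
      using \<epsilon> by (intro elog_tendsto_MInfty_imp_tendsto_0) (simp_all add: threshold)
    then show "((\<lambda>n. prob_connected n (m n) (d n)) \<longlongrightarrow> 1) sequentially"
      using large unfolding \<epsilon>_def by (intro prob_connected_tendsto_1) (auto elim: eventually_mono)
  qed
qed

end
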